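(* Let $q$ be prime, let $[[n,n-k,d]]_q$ be a non-degenerate stabilizer code, and let $M\in\mathbb{Z}^{k\times 2n}$ be an invariant form of it with maximal absolute entry $B$. Let $d^*$ be the integer distance of $M$, i.e. the minimum weight of a nonzero integer vector $e\in\mathbb{Z}^{2n}$ with $e\odot m=0$ over $\mathbb{Z}$ for every row $m$ of $M$; then $d\le d^*\le k$. For every prime $$p> B^{2(d^*-1)}\,\bigl(2(d^*-1)\bigr)^{d^*-1},$$ the code given by $M \bmod p$ has distance exactly $d^*$, so the distance cannot be further improved by embedding into more levels. In particular, the same conclusion holds for every prime $p> B^{2(k-1)}(2(k-1))^{k-1}$.
   Context: An $n$-qudit Pauli is represented by an exponent vector $(a|b)$ (over $\mathbb{Z}_r$ for $r$ prime, or over $\mathbb{Z}$). Symplectic product: $u\odot v=\sum_{l=1}^n (v_{z,l}u_{x,l}-v_{x,l}u_{z,l})$. Weight of $(a|b)$: number of $l$ with $(a_l,b_l)\ne(0,0)$. The distance of a code over $r$ levels with generator matrix $G$ is the minimum weight of a nonzero $e\in\mathbb{Z}_r^{2n}$ symplectically orthogonal mod $r$ to every row of $G$; non-degenerate means every non-identity stabilizer group element has weight at least $d$. An invariant form of a code with generator matrix $S$ over $\mathbb{Z}_q$ is an integer matrix $M\equiv S \pmod q$ whose rows have pairwise integer symplectic product $0$. *)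

theory Defs
  imports "HOL-Number_Theory.Number_Theory"
begin

text \<open>An n-qudit Pauli exponent vector (a|b) is a function
  e :: nat => int with x-part a_l = e l and z-part b_l = e (n + l) for l < n,
  and e j = 0 for j >= 2n.\<close>

definition sympl :: "nat \<Rightarrow> (nat \<Rightarrow> int) \<Rightarrow> (nat \<Rightarrow> int) \<Rightarrow> int" where
  "sympl n u v = (\<Sum>l<n. v (n + l) * u l - v l * u (n + l))"

definition weight :: "nat \<Rightarrow> (nat \<Rightarrow> int) \<Rightarrow> nat" where
  "weight n e = card {l. l < n \<and> (e l, e (n + l)) \<noteq> (0, 0)}"

text \<open>Vectors in Z_r^{2n}, represented by integers in {0..<r}.\<close>
definition vec_mod :: "int \<Rightarrow> nat \<Rightarrow> (nat \<Rightarrow> int) \<Rightarrow> bool" where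
  "vec_mod r n e \<longleftrightarrow> (\<forall>j. (j < 2 * n \<longrightarrow> 0 \<le> e j \<and> e j < r) \<and> (2 * n \<le> j \<longrightarrow> e j = 0))"

definition nonzero_vec :: "nat \<Rightarrow> (nat \<Rightarrow> int) \<Rightarrow> bool" where
  "nonzero_vec n e \<longleftrightarrow> (\<exists>j < 2 * n. e j \<noteq> 0)"

definition code_distance :: "int \<Rightarrow> nat \<Rightarrow> nat \<Rightarrow> (nat \<Rightarrow> nat \<Rightarrow> int) \<Rightarrow> nat" where
  "code_distance r n k G = (LEAST w. \<exists>e. vec_mod r n e \<and> nonzero_vec n e \<and>
      (\<forall>i < k. sympl n e (G i) mod r = 0) \<and> weight n e = w)"

definition int_distance :: "nat \<Rightarrow> nat \<Rightarrow> (nat \<Rightarrow> nat \<Rightarrow> int) \<Rightarrow> nat" where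
  "int_distance n k M = (LEAST w. \<exists>e. (\<forall>j \<ge> 2 * n. e j = 0) \<and> nonzero_vec n e \<and>
      (\<forall>i < k. sympl n e (M i) = 0) \<and> weight n e = w)"

definition stabilizer_code :: "int \<Rightarrow> nat \<Rightarrow> nat \<Rightarrow> (nat \<Rightarrow> nat \<Rightarrow> int) \<Rightarrow> bool" where
  "stabilizer_code q n k S \<longleftrightarrow>
     k \<le> n \<and>
     (\<forall>i < k. vec_mod q n (S i)) \<and>
     (\<forall>i < k. \<forall>i' < k. sympl n (S i) (S i') mod q = 0) \<and>
     (\<forall>c :: nat \<Rightarrow> int. (\<forall>j < 2 * n. (\<Sum>i<k. c i * S i j) mod q = 0) \<longrightarrow> (\<forall>i < k. c i mod q = 0))"

text \<open>Non-degenerate: every non-identity element of the stabilizer group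
  (a Z_q-linear combination of the rows, reduced mod q) has weight at least d.\<close>
definition nondegenerate :: "int \<Rightarrow> nat \<Rightarrow> nat \<Rightarrow> (nat \<Rightarrow> nat \<Rightarrow> int) \<Rightarrow> nat \<Rightarrow> bool" where
  "nondegenerate q n k S d \<longleftrightarrow>
     (\<forall>c :: nat \<Rightarrow> int.
        let g = (\<lambda>j. if j < 2 * n then (\<Sum>i<k. c i * S i j) mod q else 0)
        in nonzero_vec n g \<longrightarrow> d \<le> weight n g)"

definition invariant_form :: "int \<Rightarrow> nat \<Rightarrow> nat \<Rightarrow> (nat \<Rightarrow> nat \<Rightarrow> int) \<Rightarrow> (nat \<Rightarrow> nat \<Rightarrow> int) \<Rightarrow> bool" where
  "invariant_form q n k S M \<longleftrightarrow>
     (\<forall>i < k. \<forall>j < 2 * n. [M i j = S i j] (mod q)) \<and>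
     (\<forall>i < k. \<forall>j \<ge> 2 * n. M i j = 0) \<and>
     (\<forall>i < k. \<forall>i' < k. sympl n (M i) (M i') = 0)"

definition max_abs_entry :: "nat \<Rightarrow> nat \<Rightarrow> (nat \<Rightarrow> nat \<Rightarrow> int) \<Rightarrow> int" where
  "max_abs_entry n k M = Max {\<bar>M i j\<bar> | i j. i < k \<and> j < 2 * n}"

end

theory Submission
  imports Defs "Jordan_Normal_Form.Determinant"
begin

text \<open>Reducing a minimum-weight integer solution of the invariant form modulo q (after
  dividing out powers of q) gives an error vector undetectable by the code over q levels,
  so d \<le> d*, and the same reduction shows that the distance over p levels is at most d*.
  Conversely, an undetectable error over p levels of weight w < d* is supported on 2w
  columns on which the integer system given by M has only the trivial solution; hence some
  2w by 2w minor of M is nonzero, and by Hadamard's inequality its absolute value is at most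
  (2w B^2)^w < p, where B is the largest absolute entry of M. The minor is therefore
  invertible modulo p, forcing the error vector to vanish. Finally d* \<le> k because k
  equations in the 2k unknowns belonging to k qudits have a nonzero integer solution.\<close>

section \<open>Hadamard's inequality\<close>

lemma sum_sq_sub_proj_le:
  fixes a b :: "nat \<Rightarrow> 'a::linordered_field" and N :: nat
  defines "c \<equiv> (\<Sum>l<N. a l * b l) / (\<Sum>l<N. b l * b l)"
  shows "(\<Sum>l<N. (a l - c * b l) * (a l - c * b l)) \<le> (\<Sum>l<N. a l * a l)"
proof -
  define X where "X = (\<Sum>l<N. a l * a l)"
  define Y where "Y = (\<Sum>l<N. a l * b l)"
  define Z where "Z = (\<Sum>l<N. b l * b l)"
  have "Z \<ge> 0" unfolding Z_def by (intro sum_nonneg) auto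
  have expand: "(\<Sum>l<N. (a l - c * b l) * (a l - c * b l)) = X - 2 * c * Y + c * c * Z"
    unfolding X_def Y_def Z_def
    by (simp add: algebra_simps sum.distrib sum_subtractf sum_distrib_left)
  show ?thesis
  proof (cases "Z = 0")
    case True
    then have "c = 0" unfolding c_def Z_def by simp
    then show ?thesis using expand X_def by simp
  next
    case False
    with \<open>Z \<ge> 0\<close> have "Z > 0" by simp
    then have "X - 2 * c * Y + c * c * Z = X - Y * Y / Z"
      unfolding c_def Y_def[symmetric] Z_def[symmetric] by (simp add: field_simps)
    moreover have "Y * Y / Z \<ge> 0" using \<open>Z > 0\<close> by simp
    ultimately show ?thesis using expand X_def by simp
  qed
qed

definition mat_of_fun :: "nat \<Rightarrow> nat \<Rightarrow> (nat \<Rightarrow> nat \<Rightarrow> 'a) \<Rightarrow> 'a mat" where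
  "mat_of_fun s N f = mat s N (\<lambda>(i, l). f i l)"

definition gram_mat :: "nat \<Rightarrow> nat \<Rightarrow> (nat \<Rightarrow> nat \<Rightarrow> 'a::comm_ring_1) \<Rightarrow> 'a mat" where
  "gram_mat s N f = mat s s (\<lambda>(i, j). \<Sum>l<N. f i l * f j l)"

lemma mat_of_fun_carrier [simp]: "mat_of_fun s N f \<in> carrier_mat s N"
  by (simp add: mat_of_fun_def)

lemma gram_mat_carrier [simp]: "gram_mat s N f \<in> carrier_mat s s"
  by (simp add: gram_mat_def)

lemma mat_of_fun_mult_transpose:
  "mat_of_fun s N f * transpose_mat (mat_of_fun s N f) = gram_mat s N f"
  by (rule eq_matI) (auto simp: mat_of_fun_def gram_mat_def scalar_prod_def atLeast0LessThan)

lemma gram_mat_congruence: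
  fixes E F :: "'a::comm_ring_1 mat"
  assumes E: "E \<in> carrier_mat s s" and F: "F \<in> carrier_mat s N"
  shows "(E * F) * transpose_mat (E * F) = E * (F * transpose_mat F) * transpose_mat E"
proof -
  have Ft: "transpose_mat F \<in> carrier_mat N s" and Et: "transpose_mat E \<in> carrier_mat s s"
    using E F by auto
  have "(E * F) * transpose_mat (E * F) = (E * F) * (transpose_mat F * transpose_mat E)"
    using transpose_mult[OF E F] by simp
  also have "\<dots> = E * (F * (transpose_mat F * transpose_mat E))"
    using assoc_mult_mat[OF E F mult_carrier_mat[OF Ft Et]] .
  also have "\<dots> = E * ((F * transpose_mat F) * transpose_mat E)"
    using assoc_mult_mat[OF F Ft Et] by simp
  also have "\<dots> = E * (F * transpose_mat F) * transpose_mat E"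
    using assoc_mult_mat[OF E mult_carrier_mat[OF F Ft] Et] by simp
  finally show ?thesis .
qed

text \<open>Induction on the number of rows: subtracting from every later row its projection onto
  the first row leaves the Gram determinant unchanged, makes the first row of the Gram matrix
  diagonal, and does not increase the norms of the later rows.\<close>
lemma det_gram_mat_le:
  fixes f :: "nat \<Rightarrow> nat \<Rightarrow> 'a::linordered_field"
  shows "det (gram_mat s N f) \<le> (\<Prod>i<s. \<Sum>l<N. f i l * f i l)"
proof (induction s arbitrary: f)
  case 0
  have "gram_mat 0 N f \<in> carrier_mat 0 0" by simp
  then show ?case by simp
next
  case (Suc s)
  define Z where "Z = (\<Sum>l<N. f 0 l * f 0 l)"
  define c where "c i = (\<Sum>l<N. f i l * f 0 l) / Z" for i
  define g where "g i l = (if i = 0 then f 0 l else f i l - c i * f 0 l)" for i l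
  define E where "E = mat (Suc s) (Suc s) (\<lambda>(i, a). if a = i then 1 else if a = 0 then - c i else 0)"
  have E: "E \<in> carrier_mat (Suc s) (Suc s)" unfolding E_def by simp
  let ?F = "mat_of_fun (Suc s) N f"
  have eliminated: "mat_of_fun (Suc s) N g = E * ?F"
  proof (rule eq_matI)
    fix i l assume "i < dim_row (E * mat_of_fun (Suc s) N f)" "l < dim_col (E * mat_of_fun (Suc s) N f)"
    then have i: "i < Suc s" and l: "l < N" using E by (auto simp: mat_of_fun_def)
    have "(E * mat_of_fun (Suc s) N f) $$ (i, l) = (\<Sum>a<Suc s. E $$ (i, a) * f a l)"
      using i l E by (simp add: scalar_prod_def mat_of_fun_def atLeast0LessThan)
    also have "\<dots> = (\<Sum>a<Suc s. (if a = i then f a l else 0) + (if a = 0 \<and> i \<noteq> 0 then - c i * f a l else 0))"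
      using i by (intro sum.cong) (auto simp: E_def)
    also have "\<dots> = g i l" using i by (simp add: sum.distrib g_def)
    finally show "mat_of_fun (Suc s) N g $$ (i, l) = (E * mat_of_fun (Suc s) N f) $$ (i, l)"
      using i l by (simp add: mat_of_fun_def)
  qed (auto simp: E_def mat_of_fun_def)
  have "gram_mat (Suc s) N g = (E * ?F) * transpose_mat (E * ?F)"
    by (simp only: eliminated[symmetric] mat_of_fun_mult_transpose)
  also have "\<dots> = E * (?F * transpose_mat ?F) * transpose_mat E"
    using E mat_of_fun_carrier by (rule gram_mat_congruence)
  finally have "gram_mat (Suc s) N g = E * gram_mat (Suc s) N f * transpose_mat E"
    by (simp only: mat_of_fun_mult_transpose)
  moreover have "det E = 1"
  proof -
    have "det E = prod_list (diag_mat E)"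
      by (rule det_lower_triangular[OF _ E]) (auto simp: E_def)
    also have "diag_mat E = map (\<lambda>_. 1) [0..<Suc s]"
      using E unfolding diag_mat_def by (intro map_cong) (auto simp: E_def)
    finally show ?thesis by (simp add: map_replicate_const)
  qed
  ultimately have same_det: "det (gram_mat (Suc s) N g) = det (gram_mat (Suc s) N f)"
    using E by (simp add: det_mult[of _ "Suc s"] det_transpose)
  have first_row: "gram_mat (Suc s) N g $$ (0, j) = 0" if "0 < j" "j < Suc s" for j
  proof (cases "Z = 0")
    case True
    then have "\<forall>l\<in>{..<N}. f 0 l * f 0 l = 0" unfolding Z_def
      by (subst sum_nonneg_eq_0_iff[symmetric]) auto
    then show ?thesis using that by (simp add: gram_mat_def g_def)
  next
    case False
    have "gram_mat (Suc s) N g $$ (0, j) = (\<Sum>l<N. f 0 l * f j l) - c j * Z"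
      using that by (simp add: gram_mat_def g_def Z_def algebra_simps sum_subtractf sum_distrib_left)
    also have "\<dots> = 0" using False by (simp add: c_def mult.commute)
    finally show ?thesis .
  qed
  have "det (gram_mat (Suc s) N g)
      = (\<Sum>j<Suc s. gram_mat (Suc s) N g $$ (0, j) * cofactor (gram_mat (Suc s) N g) 0 j)"
    by (rule laplace_expansion_row) auto
  also have "\<dots> = gram_mat (Suc s) N g $$ (0, 0) * cofactor (gram_mat (Suc s) N g) 0 0"
    using first_row by (subst sum.lessThan_Suc_shift) simp
  also have "\<dots> = Z * det (gram_mat s N (\<lambda>i. g (Suc i)))"
  proof -
    have "mat_delete (gram_mat (Suc s) N g) 0 0 = gram_mat s N (\<lambda>i. g (Suc i))"
      by (rule eq_matI) (auto simp: mat_delete_def gram_mat_def)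
    then show ?thesis by (simp add: cofactor_def gram_mat_def g_def Z_def)
  qed
  finally have det_f: "det (gram_mat (Suc s) N f) = Z * det (gram_mat s N (\<lambda>i. g (Suc i)))"
    using same_det by simp
  have "det (gram_mat s N (\<lambda>i. g (Suc i))) \<le> (\<Prod>i<s. \<Sum>l<N. g (Suc i) l * g (Suc i) l)"
    by (rule Suc.IH)
  also have "\<dots> \<le> (\<Prod>i<s. \<Sum>l<N. f (Suc i) l * f (Suc i) l)"
    using sum_sq_sub_proj_le[of "f (Suc _)" "f 0" N]
    by (intro prod_mono) (auto intro: sum_nonneg simp: g_def c_def Z_def)
  finally have "Z * det (gram_mat s N (\<lambda>i. g (Suc i))) \<le> Z * (\<Prod>i<s. \<Sum>l<N. f (Suc i) l * f (Suc i) l)"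
    by (rule mult_left_mono) (auto simp: Z_def intro: sum_nonneg)
  then show ?case
    using det_f by (simp only: prod.lessThan_Suc_shift Z_def)
qed

lemma det_mat_of_fun_sq_le:
  fixes f :: "nat \<Rightarrow> nat \<Rightarrow> int"
  shows "(det (mat_of_fun m m f))\<^sup>2 \<le> (\<Prod>i<m. \<Sum>l<m. f i l * f i l)"
proof -
  have "det (gram_mat m m f) = det (mat_of_fun m m f) * det (transpose_mat (mat_of_fun m m f))"
    unfolding mat_of_fun_mult_transpose[symmetric] by (rule det_mult[of _ m]) auto
  then have gram_sq: "det (gram_mat m m f) = (det (mat_of_fun m m f))\<^sup>2"
    by (simp add: det_transpose[of "mat_of_fun m m f" m] power2_eq_square)
  have "map_mat real_of_int (gram_mat m m f) = gram_mat m m (\<lambda>i l. real_of_int (f i l))"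
    by (rule eq_matI) (auto simp: gram_mat_def)
  then have "real_of_int (det (gram_mat m m f)) = det (gram_mat m m (\<lambda>i l. real_of_int (f i l)))"
    by (metis of_int_hom.hom_det)
  also have "\<dots> \<le> (\<Prod>i<m. \<Sum>l<m. real_of_int (f i l) * real_of_int (f i l))"
    by (rule det_gram_mat_le)
  also have "\<dots> = real_of_int (\<Prod>i<m. \<Sum>l<m. f i l * f i l)" by simp
  finally show ?thesis using gram_sq by linarith
qed

lemma det_mat_of_fun_sq_le_bound:
  fixes f :: "nat \<Rightarrow> nat \<Rightarrow> int"
  assumes "\<And>i l. i < m \<Longrightarrow> l < m \<Longrightarrow> \<bar>f i l\<bar> \<le> B"
  shows "(det (mat_of_fun m m f))\<^sup>2 \<le> (int m * B\<^sup>2) ^ m"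
proof -
  have "(\<Sum>l<m. f i l * f i l) \<le> int m * B\<^sup>2" if "i < m" for i
  proof -
    have "(\<Sum>l<m. f i l * f i l) \<le> (\<Sum>l<m. B\<^sup>2)"
    proof (rule sum_mono)
      fix l assume "l \<in> {..<m}"
      then have "\<bar>f i l\<bar> \<le> B" using assms that by simp
      then have "\<bar>f i l\<bar> * \<bar>f i l\<bar> \<le> B * B" by (intro mult_mono) auto
      then show "f i l * f i l \<le> B\<^sup>2" by (simp add: power2_eq_square abs_mult_self_eq)
    qed
    then show ?thesis by simp
  qed
  then have "(\<Prod>i<m. \<Sum>l<m. f i l * f i l) \<le> (\<Prod>i<m. int m * B\<^sup>2)"
    by (intro prod_mono) (auto intro: sum_nonneg)
  then show ?thesis using det_mat_of_fun_sq_le[of m f] by simp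
qed

section \<open>Integer linear systems\<close>

definition trivial_kernel :: "(nat \<Rightarrow> nat \<Rightarrow> int) \<Rightarrow> nat set \<Rightarrow> nat set \<Rightarrow> bool" where
  "trivial_kernel A R I \<longleftrightarrow> (\<forall>y. (\<forall>i\<in>R. (\<Sum>j\<in>I. A i j * y j) = 0) \<longrightarrow> (\<forall>j\<in>I. y j = 0))"

lemma nontrivial_kernel_if_det_zero:
  fixes F :: "nat \<Rightarrow> nat \<Rightarrow> int"
  assumes f: "bij_betw f {0..<m} I" and "det (mat_of_fun m m (\<lambda>a b. F a (f b))) = 0"
  shows "\<exists>y. (\<exists>j\<in>I. y j \<noteq> 0) \<and> (\<forall>a<m. (\<Sum>j\<in>I. F a j * y j) = 0)"
proof -
  let ?Q = "mat_of_fun m m (\<lambda>a b. F a (f b))"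
  obtain v where v: "v \<in> carrier_vec m" "v \<noteq> 0\<^sub>v m" "?Q *\<^sub>v v = 0\<^sub>v m"
    using det_0_iff_vec_prod_zero[OF mat_of_fun_carrier] assms(2) by auto
  define y where "y j = (if j \<in> I then v $ (inv_into {0..<m} f j) else 0)" for j
  have y_f: "y (f b) = v $ b" if "b < m" for b
    using f that by (auto simp: y_def bij_betw_def inv_into_f_f)
  show ?thesis
  proof (intro exI conjI allI impI)
    from v(1,2) obtain b where "b < m" "v $ b \<noteq> 0" by (auto simp: vec_eq_iff)
    moreover have "f b \<in> I" using f \<open>b < m\<close> by (auto simp: bij_betw_def)
    ultimately show "\<exists>j\<in>I. y j \<noteq> 0" using y_f by metis
  next
    fix a assume a: "a < m"
    have "(\<Sum>j\<in>I. F a j * y j) = (\<Sum>b\<in>{0..<m}. F a (f b) * y (f b))"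
      using sum.reindex_bij_betw[OF f, symmetric] by simp
    also have "\<dots> = (?Q *\<^sub>v v) $ a"
      using a v(1) y_f by (simp add: mat_of_fun_def scalar_prod_def row_def)
    also have "\<dots> = 0" using v(3) a by simp
    finally show "(\<Sum>j\<in>I. F a j * y j) = 0" .
  qed
qed

lemma det_nonzero_if_trivial_kernel:
  assumes f: "bij_betw f {0..<m} I" and g: "bij_betw g {0..<m} R" and "trivial_kernel A R I"
  shows "det (mat_of_fun m m (\<lambda>a b. A (g a) (f b))) \<noteq> 0"
proof
  assume "det (mat_of_fun m m (\<lambda>a b. A (g a) (f b))) = 0"
  then obtain y where y: "\<exists>j\<in>I. y j \<noteq> 0" "\<forall>a<m. (\<Sum>j\<in>I. A (g a) j * y j) = 0"
    using nontrivial_kernel_if_det_zero[OF f, of "\<lambda>a. A (g a)"] by blast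
  have "(\<Sum>j\<in>I. A i j * y j) = 0" if "i \<in> R" for i
  proof -
    obtain a where "a < m" "g a = i" using g \<open>i \<in> R\<close> by (auto simp: bij_betw_def)
    with y(2) show ?thesis by blast
  qed
  with y(1) assms(3) show False unfolding trivial_kernel_def by blast
qed

lemma nontrivial_kernel_if_card_lt:
  fixes A :: "nat \<Rightarrow> nat \<Rightarrow> int"
  assumes "finite I" "finite R" "card R < card I"
  shows "\<exists>y. (\<exists>j\<in>I. y j \<noteq> 0) \<and> (\<forall>i\<in>R. (\<Sum>j\<in>I. A i j * y j) = 0)"
proof -
  define m where "m = card I"
  define r where "r = card R"
  obtain f where f: "bij_betw f {0..<m} I" using ex_bij_betw_nat_finite[OF assms(1)] m_def by auto
  obtain g where g: "bij_betw g {0..<r} R" using ex_bij_betw_nat_finite[OF assms(2)] r_def by auto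
  have "r < m" using assms(3) m_def r_def by simp
  text \<open>Pad the r equations with zero rows to a singular square system.\<close>
  define F where "F a = (if a < r then A (g a) else (\<lambda>_. 0))" for a
  let ?Q = "mat_of_fun m m (\<lambda>a b. F a (f b))"
  have "det ?Q = (\<Sum>b<m. ?Q $$ (r, b) * cofactor ?Q r b)"
    using \<open>r < m\<close> by (intro laplace_expansion_row) auto
  also have "\<dots> = 0" using \<open>r < m\<close> by (simp add: mat_of_fun_def F_def)
  finally obtain y where y: "\<exists>j\<in>I. y j \<noteq> 0" "\<forall>a<m. (\<Sum>j\<in>I. F a j * y j) = 0"
    using nontrivial_kernel_if_det_zero[OF f, of F] by blast
  have "(\<Sum>j\<in>I. A i j * y j) = 0" if "i \<in> R" for i
  proof -
    obtain a where "a < r" "g a = i" using g \<open>i \<in> R\<close> by (auto simp: bij_betw_def)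
    moreover from this have "(\<Sum>j\<in>I. F a j * y j) = 0" using y(2) \<open>r < m\<close> by simp
    ultimately show ?thesis by (simp add: F_def)
  qed
  with y(1) show ?thesis by blast
qed

text \<open>If no row can be dropped, choose for every row a solution of the remaining equations;
  these are more than card I vectors in a space of dimension card I, and a linear
  dependence among them is killed by each row in turn.\<close>
lemma trivial_kernel_square_subsystem:
  assumes "finite I" "finite R" "trivial_kernel A R I"
  shows "\<exists>R'\<subseteq>R. card R' = card I \<and> trivial_kernel A R' I"
  using assms(2,3)
proof (induction "card R" arbitrary: R rule: less_induct)
  case less
  consider "card R < card I" | "card R = card I" | "card R > card I" by linarith
  then show ?case
  proof cases
    case 1
    with nontrivial_kernel_if_card_lt[OF assms(1) less.prems(1) 1, of A] less.prems(2)
    show ?thesis unfolding trivial_kernel_def by blast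
  next
    case 2
    with less.prems(2) show ?thesis by blast
  next
    case 3
    have "\<exists>i\<in>R. trivial_kernel A (R - {i}) I"
    proof (rule ccontr)
      assume "\<not> (\<exists>i\<in>R. trivial_kernel A (R - {i}) I)"
      then obtain Y where Y: "\<And>i. i \<in> R \<Longrightarrow> (\<exists>j\<in>I. Y i j \<noteq> 0) \<and> (\<forall>i'\<in>R-{i}. (\<Sum>j\<in>I. A i' j * Y i j) = 0)"
        unfolding trivial_kernel_def by metis
      have Y_own_row: "(\<Sum>j\<in>I. A i j * Y i j) \<noteq> 0" if "i \<in> R" for i
      proof
        assume "(\<Sum>j\<in>I. A i j * Y i j) = 0"
        then have "\<forall>i'\<in>R. (\<Sum>j\<in>I. A i' j * Y i j) = 0" using Y[OF that] by blast
        then show False using Y[OF that] less.prems(2) unfolding trivial_kernel_def by blast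
      qed
      obtain z where z: "\<exists>i\<in>R. z i \<noteq> 0" "\<forall>j\<in>I. (\<Sum>i\<in>R. Y i j * z i) = 0"
        using nontrivial_kernel_if_card_lt[OF less.prems(1) assms(1) 3, of "\<lambda>j i. Y i j"] by blast
      have "z i0 = 0" if "i0 \<in> R" for i0
      proof -
        have "0 = (\<Sum>j\<in>I. A i0 j * (\<Sum>i\<in>R. Y i j * z i))" using z(2) by simp
        also have "\<dots> = (\<Sum>i\<in>R. z i * (\<Sum>j\<in>I. A i0 j * Y i j))"
          by (simp add: sum_distrib_left sum_distrib_right sum.swap[of _ I] algebra_simps)
        also have "\<dots> = z i0 * (\<Sum>j\<in>I. A i0 j * Y i0 j)"
          using that less.prems(1) Y by (simp add: sum.remove)
        finally show ?thesis using Y_own_row[OF that] by simp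
      qed
      with z(1) show False by blast
    qed
    then obtain i where i: "i \<in> R" "trivial_kernel A (R - {i}) I" by blast
    have "card (R - {i}) < card R" using i(1) less.prems(1) by (meson card_Diff1_less)
    with less.hyps[of "R - {i}"] i(2) less.prems(1) show ?thesis by blast
  qed
qed

lemma prime_dvd_vec_if_dvd_mult_mat_vec:
  fixes Q :: "int mat"
  assumes Q: "Q \<in> carrier_mat m m" and x: "x \<in> carrier_vec m"
    and "prime p" "\<not> p dvd det Q" and Qx: "\<forall>a<m. p dvd (Q *\<^sub>v x) $ a"
    and "b < m"
  shows "p dvd x $ b"
proof -
  have "det Q * x $ b = ((det Q \<cdot>\<^sub>m 1\<^sub>m m) *\<^sub>v x) $ b"
  proof -
    have "((det Q \<cdot>\<^sub>m 1\<^sub>m m) *\<^sub>v x) $ b = (\<Sum>i\<in>{0..<m}. det Q * (if b = i then 1 else 0) * x $ i)"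
      using x \<open>b < m\<close> by (simp add: scalar_prod_def row_def)
    also have "\<dots> = (\<Sum>i\<in>{0..<m}. if b = i then det Q * x $ i else 0)"
      by (rule sum.cong) auto
    finally show ?thesis using \<open>b < m\<close> by simp
  qed
  also have "(det Q \<cdot>\<^sub>m 1\<^sub>m m) *\<^sub>v x = adj_mat Q *\<^sub>v (Q *\<^sub>v x)"
    using adj_mat[OF Q] x by (metis assoc_mult_mat_vec Q)
  also have "(adj_mat Q *\<^sub>v (Q *\<^sub>v x)) $ b = row (adj_mat Q) b \<bullet> (Q *\<^sub>v x)"
    using adj_mat(1)[OF Q] \<open>b < m\<close> by simp
  also have "p dvd \<dots>"
    unfolding scalar_prod_def using Q Qx by (intro dvd_sum dvd_mult) auto
  finally show ?thesis using assms(3,4) by (simp add: prime_dvd_mult_iff)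
qed

text \<open>Hadamard's inequality bounds the determinant of the square system below p, so the
  system stays injective modulo p.\<close>
lemma trivial_kernel_mod_prime:
  fixes A :: "nat \<Rightarrow> nat \<Rightarrow> int" and p :: int
  assumes I: "finite I" and R: "finite R" and "card R = card I" and "trivial_kernel A R I"
    and "prime p" and A_bound: "\<forall>i\<in>R. \<forall>j\<in>I. \<bar>A i j\<bar> \<le> B"
    and "(int (card I) * B\<^sup>2) ^ card I < p\<^sup>2"
    and x: "\<forall>i\<in>R. p dvd (\<Sum>j\<in>I. A i j * x j)"
  shows "\<forall>j\<in>I. p dvd x j"
proof -
  define m where "m = card I"
  obtain f where f: "bij_betw f {0..<m} I" using ex_bij_betw_nat_finite[OF I] m_def by auto
  obtain g where g: "bij_betw g {0..<m} R" using ex_bij_betw_nat_finite[OF R] m_def assms(3) by auto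
  let ?Q = "mat_of_fun m m (\<lambda>a b. A (g a) (f b))"
  have "det ?Q \<noteq> 0" using f g assms(4) by (rule det_nonzero_if_trivial_kernel)
  moreover have "\<bar>det ?Q\<bar>\<^sup>2 < p\<^sup>2"
  proof -
    have "\<bar>A (g a) (f b)\<bar> \<le> B" if "a < m" "b < m" for a b
      using A_bound f g that by (auto simp: bij_betw_def)
    then have "(det ?Q)\<^sup>2 \<le> (int m * B\<^sup>2) ^ m" by (rule det_mat_of_fun_sq_le_bound)
    with assms(7) show ?thesis by (simp add: m_def)
  qed
  then have "\<bar>det ?Q\<bar> < p"
    using prime_ge_0_int[OF \<open>prime p\<close>] by (rule power_less_imp_less_base)
  ultimately have "\<not> p dvd det ?Q"
    using dvd_imp_le_int[of "det ?Q" p] by auto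
  show ?thesis
  proof
    fix j assume "j \<in> I"
    then obtain b where b: "b < m" "f b = j" using f by (auto simp: bij_betw_def)
    define xv where "xv = vec m (\<lambda>b. x (f b))"
    have Qx: "\<forall>a<m. p dvd (?Q *\<^sub>v xv) $ a"
    proof (intro allI impI)
      fix a assume "a < m"
      have "(?Q *\<^sub>v xv) $ a = (\<Sum>j\<in>I. A (g a) j * x j)"
        using \<open>a < m\<close> sum.reindex_bij_betw[OF f, of "\<lambda>j. A (g a) j * x j"]
        by (simp add: xv_def mat_of_fun_def scalar_prod_def row_def)
      then show "p dvd (?Q *\<^sub>v xv) $ a" using x g \<open>a < m\<close> by (auto simp: bij_betw_def)
    qed
    have "xv \<in> carrier_vec m" by (simp add: xv_def)
    from prime_dvd_vec_if_dvd_mult_mat_vec[OF mat_of_fun_carrier this \<open>prime p\<close> \<open>\<not> p dvd det ?Q\<close> Qx b(1)]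
    show "p dvd x j" using b by (simp add: xv_def)
  qed
qed

section \<open>Pauli exponent vectors\<close>

definition sympl_coeff :: "nat \<Rightarrow> (nat \<Rightarrow> int) \<Rightarrow> nat \<Rightarrow> int" where
  "sympl_coeff n v j = (if j < n then v (n + j) else - v (j - n))"

definition qudit_support :: "nat \<Rightarrow> (nat \<Rightarrow> int) \<Rightarrow> nat set" where
  "qudit_support n e = {l. l < n \<and> (e l, e (n + l)) \<noteq> (0, 0)}"

definition qudit_cols :: "nat \<Rightarrow> nat set \<Rightarrow> nat set" where
  "qudit_cols n T = T \<union> (\<lambda>l. n + l) ` T"

lemma weight_eq_card_qudit_support: "weight n e = card (qudit_support n e)"
  by (simp add: weight_def qudit_support_def)

lemma sum_lessThan_double:
  fixes F :: "nat \<Rightarrow> 'a::comm_monoid_add" and n :: nat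
  shows "(\<Sum>j<2 * n. F j) = (\<Sum>l<n. F l) + (\<Sum>l<n. F (n + l))"
proof -
  have "(\<Sum>j<2 * n. F j) = (\<Sum>j<n. F j) + (\<Sum>j=n..<n+n. F j)"
    by (simp add: mult_2 lessThan_atLeast0 sum.atLeastLessThan_concat)
  also have "(\<Sum>j=n..<n+n. F j) = (\<Sum>l<n. F (n + l))"
    by (simp add: sum.shift_bounds_nat_ivl[of _ 0 n n, simplified] lessThan_atLeast0 add.commute)
  finally show ?thesis .
qed

lemma sympl_eq_sum_coeff: "sympl n e v = (\<Sum>j<2 * n. sympl_coeff n v j * e j)"
  unfolding sum_lessThan_double sympl_def sympl_coeff_def
  by (simp add: sum_subtractf algebra_simps sum_negf)

lemma sympl_scale: "sympl n (\<lambda>j. c * e j) v = c * sympl n e v"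
  unfolding sympl_def by (simp add: sum_distrib_left algebra_simps sum_subtractf)

lemma sympl_cong:
  assumes "\<forall>j<2 * n. [e j = e' j] (mod r)" and "\<forall>j<2 * n. [v j = v' j] (mod r)"
  shows "[sympl n e v = sympl n e' v'] (mod r)"
  unfolding sympl_eq_sum_coeff sympl_coeff_def using assms
  by (intro cong_sum cong_mult) (auto intro: cong_minus_minus_iff[THEN iffD2])

lemma qudit_cols_subset: "T \<subseteq> {..<n} \<Longrightarrow> qudit_cols n T \<subseteq> {..<2 * n}"
  by (auto simp: qudit_cols_def)

lemma finite_qudit_cols: "finite T \<Longrightarrow> finite (qudit_cols n T)"
  by (simp add: qudit_cols_def)

lemma card_qudit_cols:
  assumes "T \<subseteq> {..<n}"
  shows "card (qudit_cols n T) = 2 * card T"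
proof -
  have "finite T" using assms finite_subset by blast
  moreover have "T \<inter> (\<lambda>l. n + l) ` T = {}" using assms by auto
  ultimately have "card (qudit_cols n T) = card T + card ((\<lambda>l. n + l) ` T)"
    unfolding qudit_cols_def by (simp add: card_Un_disjoint)
  also have "card ((\<lambda>l. n + l) ` T) = card T" by (rule card_image) (auto simp: inj_on_def)
  finally show ?thesis by simp
qed

lemma vanishes_outside_qudit_cols_support:
  assumes "j < 2 * n" "j \<notin> qudit_cols n (qudit_support n e)"
  shows "e j = 0"
proof (cases "j < n")
  case True
  then show ?thesis using assms by (auto simp: qudit_cols_def qudit_support_def)
next
  case False
  then have "j = n + (j - n)" "j - n < n" using assms(1) by auto
  moreover from this have "j - n \<notin> qudit_support n e" using assms(2) unfolding qudit_cols_def by blast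
  ultimately show ?thesis by (auto simp: qudit_support_def)
qed

lemma sympl_eq_sum_qudit_cols:
  assumes "T \<subseteq> {..<n}" and "\<And>j. j < 2 * n \<Longrightarrow> j \<notin> qudit_cols n T \<Longrightarrow> e j = 0"
  shows "sympl n e v = (\<Sum>j\<in>qudit_cols n T. sympl_coeff n v j * e j)"
  unfolding sympl_eq_sum_coeff
  by (rule sum.mono_neutral_right) (use assms qudit_cols_subset in auto)

lemma weight_le_card:
  assumes "T \<subseteq> {..<n}" and "\<And>j. j < 2 * n \<Longrightarrow> j \<notin> qudit_cols n T \<Longrightarrow> e j = 0"
  shows "weight n e \<le> card T"
proof -
  have "qudit_support n e \<subseteq> T"
  proof
    fix l assume l: "l \<in> qudit_support n e"
    show "l \<in> T"
    proof (rule ccontr)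
      assume "l \<notin> T"
      moreover have "l < n" using l by (simp add: qudit_support_def)
      ultimately have "l \<notin> qudit_cols n T" "n + l \<notin> qudit_cols n T"
        using assms(1) by (auto simp: qudit_cols_def)
      with assms(2) \<open>l < n\<close> have "e l = 0" "e (n + l) = 0" by auto
      then show False using l by (auto simp: qudit_support_def)
    qed
  qed
  then show ?thesis unfolding weight_eq_card_qudit_support
    using assms(1) by (intro card_mono) (auto intro: finite_subset)
qed

lemma weight_mono:
  assumes "\<And>j. e j = 0 \<Longrightarrow> e' j = 0"
  shows "weight n e' \<le> weight n e"
  unfolding weight_eq_card_qudit_support
  by (rule card_mono) (use assms in \<open>auto simp: qudit_support_def\<close>)

section \<open>Orthogonal vectors and their reduction\<close>

definition int_orth_vec :: "nat \<Rightarrow> nat \<Rightarrow> (nat \<Rightarrow> nat \<Rightarrow> int) \<Rightarrow> (nat \<Rightarrow> int) \<Rightarrow> bool" where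
  "int_orth_vec n k M e \<longleftrightarrow>
     (\<forall>j \<ge> 2 * n. e j = 0) \<and> nonzero_vec n e \<and> (\<forall>i < k. sympl n e (M i) = 0)"

definition orth_vec_mod :: "int \<Rightarrow> nat \<Rightarrow> nat \<Rightarrow> (nat \<Rightarrow> nat \<Rightarrow> int) \<Rightarrow> (nat \<Rightarrow> int) \<Rightarrow> bool" where
  "orth_vec_mod r n k G e \<longleftrightarrow>
     vec_mod r n e \<and> nonzero_vec n e \<and> (\<forall>i < k. sympl n e (G i) mod r = 0)"

lemma int_distance_le_weight: "int_orth_vec n k M e \<Longrightarrow> int_distance n k M \<le> weight n e"
  unfolding int_distance_def int_orth_vec_def by (rule Least_le) blast

lemma int_distance_attained:
  assumes "int_orth_vec n k M e"
  shows "\<exists>e'. int_orth_vec n k M e' \<and> weight n e' = int_distance n k M"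
proof -
  have "\<exists>w. \<exists>e. int_orth_vec n k M e \<and> weight n e = w" using assms by blast
  from LeastI_ex[OF this] show ?thesis unfolding int_distance_def int_orth_vec_def by simp
qed

lemma code_distance_le_weight: "orth_vec_mod r n k G e \<Longrightarrow> code_distance r n k G \<le> weight n e"
  unfolding code_distance_def orth_vec_mod_def by (rule Least_le) blast

lemma code_distance_attained:
  assumes "orth_vec_mod r n k G e"
  shows "\<exists>e'. orth_vec_mod r n k G e' \<and> weight n e' = code_distance r n k G"
proof -
  have "\<exists>w. \<exists>e. orth_vec_mod r n k G e \<and> weight n e = w" using assms by blast
  from LeastI_ex[OF this] show ?thesis unfolding code_distance_def orth_vec_mod_def by simp
qed

lemma int_orth_vec_of_kernel_vector:
  assumes T: "T \<subseteq> {..<n}"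
    and y: "\<exists>j\<in>qudit_cols n T. y j \<noteq> 0"
      "\<forall>i\<in>{..<k}. (\<Sum>j\<in>qudit_cols n T. sympl_coeff n (M i) j * y j) = 0"
  shows "\<exists>e. int_orth_vec n k M e \<and> weight n e \<le> card T"
proof -
  define e where "e j = (if j \<in> qudit_cols n T then y j else 0)" for j
  have outside: "e j = 0" if "j \<notin> qudit_cols n T" for j using that by (simp add: e_def)
  have "sympl n e (M i) = 0" if "i < k" for i
  proof -
    have "sympl n e (M i) = (\<Sum>j\<in>qudit_cols n T. sympl_coeff n (M i) j * e j)"
      using T outside by (rule sympl_eq_sum_qudit_cols)
    also have "\<dots> = (\<Sum>j\<in>qudit_cols n T. sympl_coeff n (M i) j * y j)"
      by (rule sum.cong) (auto simp: e_def)
    finally show ?thesis using y(2) that by simp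
  qed
  moreover have "nonzero_vec n e"
    using y(1) qudit_cols_subset[OF T] unfolding nonzero_vec_def by (auto simp: e_def)
  moreover have "\<forall>j \<ge> 2 * n. e j = 0"
  proof (intro allI impI)
    fix j assume "2 * n \<le> j"
    then have "j \<notin> qudit_cols n T" using qudit_cols_subset[OF T] by auto
    then show "e j = 0" by (rule outside)
  qed
  moreover have "weight n e \<le> card T" using T outside by (rule weight_le_card)
  ultimately show ?thesis unfolding int_orth_vec_def by blast
qed

lemma int_orth_vec_weight_le_rows:
  assumes "1 \<le> k" "k \<le> n"
  shows "\<exists>e. int_orth_vec n k M e \<and> weight n e \<le> k"
proof -
  have T: "{..<k} \<subseteq> {..<n}" using assms(2) by auto
  have "card {..<k} < card (qudit_cols n {..<k})"
    using card_qudit_cols[OF T] assms(1) by simp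
  then obtain y where "\<exists>j\<in>qudit_cols n {..<k}. y j \<noteq> 0"
      "\<forall>i\<in>{..<k}. (\<Sum>j\<in>qudit_cols n {..<k}. sympl_coeff n (M i) j * y j) = 0"
    using nontrivial_kernel_if_card_lt[where A = "\<lambda>i. sympl_coeff n (M i)",
        OF finite_qudit_cols[OF finite_lessThan] finite_lessThan] by blast
  then show ?thesis using int_orth_vec_of_kernel_vector[OF T] by simp
qed

text \<open>Dividing by r as long as every entry is divisible by r terminates, since the sum of
  absolute values strictly decreases.\<close>
lemma int_orth_vec_not_all_dvd:
  fixes r :: int
  assumes "r > 1"
  shows "int_orth_vec n k M e \<Longrightarrow>
    \<exists>e'. int_orth_vec n k M e' \<and> (\<exists>j<2 * n. \<not> r dvd e' j) \<and> (\<forall>j. e' j = 0 \<longleftrightarrow> e j = 0)"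
proof (induction "nat (\<Sum>j<2 * n. \<bar>e j\<bar>)" arbitrary: e rule: less_induct)
  case less
  show ?case
  proof (cases "\<exists>j<2 * n. \<not> r dvd e j")
    case True
    with less.prems show ?thesis by blast
  next
    case False
    define e' where "e' j = e j div r" for j
    have e_eq: "e j = r * e' j" for j
      using False less.prems by (cases "j < 2 * n") (auto simp: e'_def int_orth_vec_def)
    have same_zeros: "e' j = 0 \<longleftrightarrow> e j = 0" for j using e_eq assms by auto
    have "sympl n e' (M i) = 0" if "i < k" for i
    proof -
      have "r * sympl n e' (M i) = sympl n e (M i)"
        by (simp add: sympl_scale[symmetric] e_eq[abs_def])
      then show ?thesis using less.prems that assms by (simp add: int_orth_vec_def)
    qed
    then have orth': "int_orth_vec n k M e'"
      using less.prems same_zeros by (auto simp: int_orth_vec_def nonzero_vec_def)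
    have "(\<Sum>j<2 * n. \<bar>e' j\<bar>) < (\<Sum>j<2 * n. \<bar>e j\<bar>)"
    proof (rule sum_strict_mono_ex1)
      have "\<bar>e' j\<bar> \<le> \<bar>r\<bar> * \<bar>e' j\<bar>" for j using assms by (simp add: mult_le_cancel_right1)
      then show "\<forall>j\<in>{..<2 * n}. \<bar>e' j\<bar> \<le> \<bar>e j\<bar>" by (simp add: e_eq abs_mult)
      from orth' obtain j where "j < 2 * n" "e' j \<noteq> 0"
        by (auto simp: int_orth_vec_def nonzero_vec_def)
      moreover from this have "\<bar>e' j\<bar> < \<bar>e j\<bar>" using assms by (simp add: e_eq abs_mult)
      ultimately show "\<exists>j\<in>{..<2 * n}. \<bar>e' j\<bar> < \<bar>e j\<bar>" by blast
    qed simp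
    then have "nat (\<Sum>j<2 * n. \<bar>e' j\<bar>) < nat (\<Sum>j<2 * n. \<bar>e j\<bar>)"
      using sum_nonneg[of "{..<2 * n}" "\<lambda>j. \<bar>e' j\<bar>"] by linarith
    from less.hyps[OF this orth'] show ?thesis using same_zeros by auto
  qed
qed

lemma orth_vec_mod_of_int_orth_vec:
  fixes r :: int
  assumes "r > 1" and "int_orth_vec n k M e"
    and cong: "\<forall>i < k. \<forall>j < 2 * n. [G i j = M i j] (mod r)"
  shows "\<exists>e'. orth_vec_mod r n k G e' \<and> weight n e' \<le> weight n e"
proof -
  obtain e1 where e1: "int_orth_vec n k M e1" "\<exists>j<2 * n. \<not> r dvd e1 j" "\<forall>j. e1 j = 0 \<longleftrightarrow> e j = 0"
    using int_orth_vec_not_all_dvd[OF assms(1,2)] by blast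
  define e' where "e' j = (if j < 2 * n then e1 j mod r else 0)" for j
  have "sympl n e' (G i) mod r = 0" if "i < k" for i
  proof -
    have "[sympl n e' (G i) = sympl n e1 (M i)] (mod r)"
      using cong that by (intro sympl_cong) (auto simp: e'_def cong_def)
    then show ?thesis using e1(1) that by (simp add: int_orth_vec_def cong_def)
  qed
  moreover have "weight n e' \<le> weight n e"
  proof (rule weight_mono)
    fix j assume "e j = 0"
    with e1(3) have "e1 j = 0" by blast
    then show "e' j = 0" by (simp add: e'_def)
  qed
  ultimately show ?thesis
    using e1(2) assms(1) unfolding orth_vec_mod_def vec_mod_def nonzero_vec_def
    by (auto simp: e'_def dvd_eq_mod_eq_0 intro!: exI[of _ e'])
qed

lemma code_distance_le_int_distance:
  fixes r :: int
  assumes "r > 1" and "int_orth_vec n k M e"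
    and "\<forall>i < k. \<forall>j < 2 * n. [G i j = M i j] (mod r)"
  shows "code_distance r n k G \<le> int_distance n k M"
proof -
  obtain e0 where e0: "int_orth_vec n k M e0" "weight n e0 = int_distance n k M"
    using int_distance_attained[OF assms(2)] by blast
  obtain e' where "orth_vec_mod r n k G e'" "weight n e' \<le> weight n e0"
    using orth_vec_mod_of_int_orth_vec[OF assms(1) e0(1) assms(3)] by blast
  with e0(2) show ?thesis using code_distance_le_weight by fastforce
qed

section \<open>The distance modulo a large prime\<close>

lemma abs_le_max_abs_entry:
  assumes "i < k" "j < 2 * n"
  shows "\<bar>M i j\<bar> \<le> max_abs_entry n k M"
  unfolding max_abs_entry_def
proof (rule Max_ge)
  have "{\<bar>M i j\<bar> | i j. i < k \<and> j < 2 * n} \<subseteq> (\<lambda>(i, j). \<bar>M i j\<bar>) ` ({..<k} \<times> {..<2 * n})"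
    by auto
  then show "finite {\<bar>M i j\<bar> | i j. i < k \<and> j < 2 * n}" by (rule finite_subset) auto
  show "\<bar>M i j\<bar> \<in> {\<bar>M i j\<bar> | i j. i < k \<and> j < 2 * n}" using assms by blast
qed

lemma abs_sympl_coeff_le_max_abs_entry:
  assumes "i < k" "j < 2 * n"
  shows "\<bar>sympl_coeff n (M i) j\<bar> \<le> max_abs_entry n k M"
  using abs_le_max_abs_entry[OF assms(1), of "n + j" n M] abs_le_max_abs_entry[OF assms(1), of "j - n" n M]
    assms(2) by (auto simp: sympl_coeff_def)

lemma trivial_kernel_below_int_distance:
  assumes T: "T \<subseteq> {..<n}" and "card T < int_distance n k M"
  shows "trivial_kernel (\<lambda>i. sympl_coeff n (M i)) {..<k} (qudit_cols n T)"
  unfolding trivial_kernel_def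
proof (intro allI impI)
  fix y assume y: "\<forall>i\<in>{..<k}. (\<Sum>j\<in>qudit_cols n T. sympl_coeff n (M i) j * y j) = 0"
  show "\<forall>j\<in>qudit_cols n T. y j = 0"
  proof (rule ccontr)
    assume "\<not> (\<forall>j\<in>qudit_cols n T. y j = 0)"
    then obtain e where "int_orth_vec n k M e" "weight n e \<le> card T"
      using int_orth_vec_of_kernel_vector[OF T _ y] by blast
    with assms(2) show False using int_distance_le_weight by fastforce
  qed
qed

lemma hadamard_bound_mono:
  fixes B :: int
  assumes "0 \<le> B" and "a \<le> b" and "1 < x" and "B ^ (2 * b) * int (2 * b) ^ b < x"
  shows "B ^ (2 * a) * int (2 * a) ^ a < x"
proof (cases "B = 0")
  case True
  then have "B ^ (2 * a) * int (2 * a) ^ a \<le> 1" by (cases "a = 0") (auto simp: power_0_left)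
  with assms(3) show ?thesis by linarith
next
  case False
  with assms(1) have "1 \<le> B" by simp
  have "int (2 * a) ^ a \<le> int (2 * b) ^ b"
  proof (cases "a = 0")
    case True
    then show ?thesis using one_le_power[of "int (2 * b)" b] by (cases "b = 0") auto
  next
    case False
    have "int (2 * a) ^ a \<le> int (2 * b) ^ a" using assms(2) by (intro power_mono) auto
    also have "\<dots> \<le> int (2 * b) ^ b" using assms(2) False by (intro power_increasing) auto
    finally show ?thesis .
  qed
  moreover have "B ^ (2 * a) \<le> B ^ (2 * b)" using \<open>1 \<le> B\<close> assms(2) by (intro power_increasing) auto
  ultimately have "B ^ (2 * a) * int (2 * a) ^ a \<le> B ^ (2 * b) * int (2 * b) ^ b"
    using assms(1) by (intro mult_mono) auto
  with assms(4) show ?thesis by linarith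
qed

lemma hadamard_bound_sq_below_prime:
  fixes B :: int and w D p :: nat
  assumes "0 \<le> B" and "w \<le> D - 1" and "prime p"
    and "int p > B ^ (2 * (D - 1)) * int (2 * (D - 1)) ^ (D - 1)"
  shows "(int (2 * w) * B\<^sup>2) ^ (2 * w) < (int p)\<^sup>2"
proof -
  have "B ^ (2 * w) * int (2 * w) ^ w < int p"
    using hadamard_bound_mono[OF assms(1,2)] assms(3,4) prime_gt_1_nat by simp
  then have "(B ^ (2 * w) * int (2 * w) ^ w)\<^sup>2 < (int p)\<^sup>2"
    using assms(1) by (intro power_strict_mono) auto
  then show ?thesis by (simp add: power_mult_distrib power_mult[symmetric] mult.commute)
qed

lemma dvd_sympl_if_orth_vec_mod:
  assumes "orth_vec_mod r n k (\<lambda>i j. M i j mod r) e" and "i < k"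
  shows "r dvd sympl n e (M i)"
proof -
  have "[sympl n e (\<lambda>j. M i j mod r) = sympl n e (M i)] (mod r)"
    by (intro sympl_cong) (auto simp: cong_def)
  with assms show ?thesis by (simp add: orth_vec_mod_def cong_def dvd_eq_mod_eq_0)
qed

lemma vec_mod_eq_zero_if_dvd:
  assumes "vec_mod r n e" "j < 2 * n" "r dvd e j"
  shows "e j = 0"
proof (rule ccontr)
  assume "e j \<noteq> 0"
  with assms(1,2) have "0 < e j" "e j < r" by (auto simp: vec_mod_def order_le_less)
  with assms(3) show False using zdvd_not_zless by blast
qed

lemma int_distance_le_weight_mod_prime:
  fixes M :: "nat \<Rightarrow> nat \<Rightarrow> int" and p :: nat
  assumes "prime p"
    and bound: "int p > max_abs_entry n k M ^ (2 * (int_distance n k M - 1)) *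
                  int (2 * (int_distance n k M - 1)) ^ (int_distance n k M - 1)"
    and e: "orth_vec_mod (int p) n k (\<lambda>i j. M i j mod int p) e"
  shows "int_distance n k M \<le> weight n e"
proof (rule ccontr)
  assume "\<not> int_distance n k M \<le> weight n e"
  then have light: "weight n e < int_distance n k M" by simp
  define T where "T = qudit_support n e"
  define I where "I = qudit_cols n T"
  define A where "A i = sympl_coeff n (M i)" for i
  define B where "B = max_abs_entry n k M"
  have T: "T \<subseteq> {..<n}" by (auto simp: T_def qudit_support_def)
  have I: "finite I" "I \<subseteq> {..<2 * n}"
    using finite_qudit_cols[OF finite_subset[OF T]] qudit_cols_subset[OF T] by (simp_all add: I_def)
  have outside: "e j = 0" if "j < 2 * n" "j \<notin> I" for j
    using vanishes_outside_qudit_cols_support that unfolding I_def T_def by blast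
  have card_I: "card I = 2 * weight n e"
    unfolding I_def T_def weight_eq_card_qudit_support using T card_qudit_cols T_def by blast
  have "card T < int_distance n k M" using light by (simp add: T_def weight_eq_card_qudit_support)
  then have "trivial_kernel A {..<k} I"
    unfolding A_def I_def by (rule trivial_kernel_below_int_distance[OF T])
  then obtain R where R: "R \<subseteq> {..<k}" "card R = card I" "trivial_kernel A R I"
    using trivial_kernel_square_subsystem[OF I(1) finite_lessThan] by blast
  have A_bound: "\<forall>i\<in>R. \<forall>j\<in>I. \<bar>A i j\<bar> \<le> B"
    using R(1) I(2) abs_sympl_coeff_le_max_abs_entry unfolding A_def B_def by blast
  obtain j0 where "j0 < 2 * n" "e j0 \<noteq> 0" using e by (auto simp: orth_vec_mod_def nonzero_vec_def)
  then have "j0 \<in> I" using outside by blast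
  then have "I \<noteq> {}" "R \<noteq> {}" using R(2) I(1) by auto
  then have "0 \<le> B" using A_bound by fastforce
  have "(int (card I) * B\<^sup>2) ^ card I < (int p)\<^sup>2"
    unfolding card_I B_def using hadamard_bound_sq_below_prime[OF _ _ \<open>prime p\<close> bound] \<open>0 \<le> B\<close> light
    by (simp add: B_def)
  moreover have "\<forall>i\<in>R. int p dvd (\<Sum>j\<in>I. A i j * e j)"
  proof
    fix i assume "i \<in> R"
    have "sympl n e (M i) = (\<Sum>j\<in>I. A i j * e j)"
      unfolding I_def A_def using T outside by (intro sympl_eq_sum_qudit_cols) (auto simp: I_def)
    moreover have "int p dvd sympl n e (M i)"
      using e \<open>i \<in> R\<close> R(1) by (intro dvd_sympl_if_orth_vec_mod) auto
    ultimately show "int p dvd (\<Sum>j\<in>I. A i j * e j)" by simp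
  qed
  ultimately have "\<forall>j\<in>I. int p dvd e j"
    using trivial_kernel_mod_prime[OF I(1) _ R(2) R(3) _ A_bound] R(1) \<open>prime p\<close>
    by (meson finite_lessThan finite_subset prime_nat_int_transfer)
  then have "e j0 = 0"
    using vec_mod_eq_zero_if_dvd e \<open>j0 < 2 * n\<close> \<open>j0 \<in> I\<close> by (auto simp: orth_vec_mod_def)
  with \<open>e j0 \<noteq> 0\<close> show False ..
qed

lemma code_distance_mod_prime_eq_int_distance:
  fixes M :: "nat \<Rightarrow> nat \<Rightarrow> int" and p :: nat
  assumes "prime p" and "int_orth_vec n k M e"
    and bound: "int p > max_abs_entry n k M ^ (2 * (int_distance n k M - 1)) *
                  int (2 * (int_distance n k M - 1)) ^ (int_distance n k M - 1)"
  shows "code_distance (int p) n k (\<lambda>i j. M i j mod int p) = int_distance n k M"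
proof (rule antisym)
  have p: "int p > 1" using \<open>prime p\<close> prime_gt_1_nat by simp
  have cong: "\<forall>i < k. \<forall>j < 2 * n. [M i j mod int p = M i j] (mod int p)" by (simp add: cong_def)
  show "code_distance (int p) n k (\<lambda>i j. M i j mod int p) \<le> int_distance n k M"
    using code_distance_le_int_distance[OF p assms(2) cong] .
  obtain e' where "orth_vec_mod (int p) n k (\<lambda>i j. M i j mod int p) e'"
    using orth_vec_mod_of_int_orth_vec[OF p assms(2) cong] by blast
  then obtain e'' where "orth_vec_mod (int p) n k (\<lambda>i j. M i j mod int p) e''"
      "weight n e'' = code_distance (int p) n k (\<lambda>i j. M i j mod int p)"
    using code_distance_attained by blast
  then show "int_distance n k M \<le> code_distance (int p) n k (\<lambda>i j. M i j mod int p)"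
    using int_distance_le_weight_mod_prime[OF \<open>prime p\<close> bound] by metis
qed

theorem corollary2:
  fixes q :: nat and n k d :: nat and S M :: "nat \<Rightarrow> nat \<Rightarrow> int"
  assumes "prime q"
    and "1 \<le> k"
    and "stabilizer_code (int q) n k S"
    and "code_distance (int q) n k S = d"
    and "nondegenerate (int q) n k S d"
    and "invariant_form (int q) n k S M"
  shows "d \<le> int_distance n k M \<and> int_distance n k M \<le> k \<and>
    (\<forall>p :: nat. prime p \<and>
        int p > max_abs_entry n k M ^ (2 * (int_distance n k M - 1)) *
                  int (2 * (int_distance n k M - 1)) ^ (int_distance n k M - 1)
      \<longrightarrow> code_distance (int p) n k (\<lambda>i j. M i j mod int p) = int_distance n k M) \<and>
    (\<forall>p :: nat. prime p \<and>
        int p > max_abs_entry n k M ^ (2 * (k - 1)) * int (2 * (k - 1)) ^ (k - 1)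
      \<longrightarrow> code_distance (int p) n k (\<lambda>i j. M i j mod int p) = int_distance n k M)"
proof -
  have "k \<le> n" using assms(3) by (simp add: stabilizer_code_def)
  then obtain e where e: "int_orth_vec n k M e" "weight n e \<le> k"
    using int_orth_vec_weight_le_rows[OF assms(2)] by blast
  have "d \<le> int_distance n k M"
    using code_distance_le_int_distance[OF _ e(1), of "int q" S] assms(1,4,6) prime_gt_1_nat
    by (auto simp: invariant_form_def cong_sym)
  moreover have "int_distance n k M \<le> k" using int_distance_le_weight[OF e(1)] e(2) by simp
  moreover have large_prime: "code_distance (int p) n k (\<lambda>i j. M i j mod int p) = int_distance n k M"
    if "prime p" "int p > max_abs_entry n k M ^ (2 * (int_distance n k M - 1)) *
                  int (2 * (int_distance n k M - 1)) ^ (int_distance n k M - 1)" for p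
    using code_distance_mod_prime_eq_int_distance[OF that(1) e(1) that(2)] .
  moreover have "0 \<le> max_abs_entry n k M"
    using abs_le_max_abs_entry[of 0 k 0 n M] assms(2) \<open>k \<le> n\<close> by simp
  ultimately show ?thesis
    using large_prime hadamard_bound_mono[of "max_abs_entry n k M" "int_distance n k M - 1" "k - 1"]
      prime_gt_1_nat by force
qed

end
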